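(* Let $m$ be odd, $q=2^m$, $R=GR(4,m)$ with Teichmüller set $\mathcal{T}$, let $B\in\mathcal{T}$ with $B\ne0$, and let $d\in\mathbb{F}_q$. The number of quadruples $(X,Y,Z,W)\in\mathcal{T}^4$ satisfying $$X+Y-Z-W=2B,\qquad x^3+y^3+z^3+w^3=b^3d$$ is $2^m$ if $d=0$, is $2^{m+1}$ if $d\in M_1$, and is $0$ if $d\in M_0\cup M_3$.
   Context: $R=GR(4,m)=\mathbb{Z}_4[x]/(f(x))$ with $f$ monic of degree $m$ irreducible mod 2; $\mathcal{T}=\{0,1,\beta,\dots,\beta^{q-2}\}$ with $\beta\in R^*$ of order $q-1$; lower-case letters denote reductions mod 2 (in $\mathbb{F}_q$) of the corresponding elements of $\mathcal{T}$. For $c\in\mathbb{F}_q$ let $f_c(x)=x^3+x+c$, and for $i\in\{0,1,3\}$ let $M_i=\{c\in\mathbb{F}_q^*: f_c(x)=0 \text{ has exactly } i \text{ solutions in } \mathbb{F}_q\}$. *)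

theory Defs
  imports "HOL-Computational_Algebra.Polynomial" "HOL-Library.Numeral_Type" "HOL-Library.Z2"
begin

text \<open>GR(4,m) = Z_4[x]/(f) is represented by the canonical representatives,
  i.e. polynomials over Z_4 of degree < m, with equality in R being congruence modulo f.
  Likewise F_q = F_2[x]/(f mod 2) is represented by polynomials over F_2 of degree < m.\<close>

definition red2 :: "4 \<Rightarrow> bit" where
  "red2 c = of_int (Rep_bit0 c)"

definition redpoly :: "4 poly \<Rightarrow> bit poly" where
  "redpoly p = map_poly red2 p"

definition GR_carrier :: "nat \<Rightarrow> 4 poly set" where
  "GR_carrier m = {p. degree p < m}"

definition Fq_carrier :: "nat \<Rightarrow> bit poly set" where
  "Fq_carrier m = {p. degree p < m}"

definition GR_modulus :: "nat \<Rightarrow> 4 poly \<Rightarrow> bool" where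
  "GR_modulus m f \<longleftrightarrow> lead_coeff f = 1 \<and> degree f = m \<and> irreducible (redpoly f)"

definition GR_unit_of_order :: "4 poly \<Rightarrow> 4 poly \<Rightarrow> nat \<Rightarrow> bool" where
  "GR_unit_of_order f \<beta> n \<longleftrightarrow> (\<exists>u. f dvd (\<beta> * u - 1)) \<and> 0 < n \<and>
     f dvd (\<beta> ^ n - 1) \<and> (\<forall>k. 0 < k \<and> k < n \<longrightarrow> \<not> f dvd (\<beta> ^ k - 1))"

definition Teich :: "nat \<Rightarrow> 4 poly \<Rightarrow> 4 poly \<Rightarrow> 4 poly set" where
  "Teich m f \<beta> = {X \<in> GR_carrier m. X = 0 \<or> (\<exists>i < 2 ^ m - 1. f dvd (X - \<beta> ^ i))}"

definition Mset :: "nat \<Rightarrow> 4 poly \<Rightarrow> nat \<Rightarrow> bit poly set" where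
  "Mset m f i = {c \<in> Fq_carrier m. c \<noteq> 0 \<and>
      card {x \<in> Fq_carrier m. redpoly f dvd (x ^ 3 + x + c)} = i}"

end

theory Submission
  imports Defs "HOL-Computational_Algebra.Polynomial_Factorial"
begin

text \<open>Reduction modulo 2 maps the Teichmueller set bijectively onto \<open>\<bbbF>\<^sub>q\<close>. Teichmueller
  elements are fixed by \<open>X \<mapsto> X\<^sup>q\<close>, and modulo 4 one has \<open>(X + Y)\<^sup>q = X\<^sup>q + Y\<^sup>q + 2 (X Y)\<^sup>q\<^sup>/\<^sup>2\<close>;
  hence \<open>X + Y - Z - W = 2 B\<close> in \<open>GR(4, m)\<close> is equivalent to \<open>x + y + z + w = 0\<close> and
  \<open>x y + z w = b\<^sup>2\<close> over \<open>\<bbbF>\<^sub>q\<close>. Under these two equations the cubic condition becomes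
  \<open>x + y = b d\<close>, so the solutions are parametrised by \<open>x \<in> \<bbbF>\<^sub>q\<close> and a root of
  \<open>u\<^sup>2 + b d u + b\<^sup>2\<close>: there are \<open>q\<close> times as many as roots of \<open>v\<^sup>2 + d v + 1\<close>.
  For odd \<open>m\<close> that number is 1, 2 or 0 according as \<open>d = 0\<close>, \<open>d \<in> M\<^sub>1\<close> or \<open>d \<in> M\<^sub>0 \<union> M\<^sub>3\<close>.
  This follows from the Artin-Schreier criterion (\<open>v\<^sup>2 + d v + 1\<close> has a root iff
  \<open>Tr(1/d\<^sup>2) = 0\<close>), from \<open>Tr(1) = 1\<close>, and from \<open>Tr(1/d\<^sup>2) = Tr(1/r\<^sup>2)\<close> for a root \<open>r\<close>
  of \<open>x\<^sup>3 + x + d\<close>, whose other roots exist iff \<open>Tr(1 + 1/r\<^sup>2) = 0\<close>.\<close>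

section \<open>Reduction modulo 2\<close>

lemma Z4_cases: "(c::4) = 0 \<or> c = 1 \<or> c = 2 \<or> c = 3"
proof (induct c)
  case (of_int z)
  then have "z \<in> {0,1,2,3}" by auto
  then show ?case by auto
qed

lemma red2_0 [simp]: "red2 0 = 0" and red2_1 [simp]: "red2 1 = 1"
  by (simp_all add: red2_def bit0.Rep_0 bit0.Rep_1)

lemma red2_numeral [simp]: "red2 (numeral w) = of_int (numeral w mod 4)"
  by (simp add: red2_def bit0.Rep_numeral)

lemma red2_add: "red2 (a + b) = red2 a + red2 b"
  and red2_mult: "red2 (a * b) = red2 a * red2 b"
  using Z4_cases[of a] Z4_cases[of b] by auto

lemma red2_uminus: "red2 (- a) = red2 a"
proof -
  have [simp]: "-(1::4) = 3" "-(2::4) = 2" "-(3::4) = 1" by simp_all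
  show ?thesis using Z4_cases[of a] by auto
qed

lemma numeral_bit_poly [simp]: "(numeral n :: bit poly) = [:numeral n:]"
  by (rule numeral_poly)

lemma uminus_bit_poly [simp]: "- (p :: bit poly) = p"
  by (simp add: poly_eq_iff)

lemma diff_bit_poly [simp]: "(p :: bit poly) - q = p + q"
  by simp

lemma add_self_bit_poly [simp]: "(p :: bit poly) + p = 0"
  by (simp add: poly_eq_iff)

lemma add_self_left_bit_poly [simp]: "(p :: bit poly) + (p + q) = q"
  by (simp flip: add.assoc)

lemma add_eq_0_iff_bit_poly [simp]: "(p :: bit poly) + q = 0 \<longleftrightarrow> p = q"
  by (metis add_self_bit_poly add_eq_0_iff2 uminus_bit_poly)

lemma numeral_4_poly_eq_0: "(4 :: 4 poly) = 0"
  by (simp add: numeral_poly)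

lemma redpoly_0 [simp]: "redpoly 0 = 0"
  and redpoly_1 [simp]: "redpoly 1 = 1"
  by (simp_all add: redpoly_def)

lemma redpoly_add: "redpoly (p + q) = redpoly p + redpoly q"
  by (simp add: redpoly_def poly_eq_iff coeff_map_poly red2_add)

lemma redpoly_uminus: "redpoly (- p) = redpoly p"
  by (simp add: redpoly_def poly_eq_iff coeff_map_poly red2_uminus)

lemma redpoly_diff: "redpoly (p - q) = redpoly p + redpoly q"
  by (metis diff_conv_add_uminus redpoly_add redpoly_uminus)

lemma redpoly_smult: "redpoly (smult c p) = smult (red2 c) (redpoly p)"
  unfolding redpoly_def by (rule map_poly_smult) (simp_all add: red2_mult)

lemma redpoly_pCons: "redpoly (pCons c p) = pCons (red2 c) (redpoly p)"
  unfolding redpoly_def by (rule map_poly_pCons) simp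

lemma redpoly_mult: "redpoly (p * q) = redpoly p * redpoly q"
  by (induct p) (simp_all add: redpoly_add redpoly_smult redpoly_pCons)

lemma redpoly_power: "redpoly (p ^ n) = redpoly p ^ n"
  by (induct n) (simp_all add: redpoly_mult)

lemma redpoly_2 [simp]: "redpoly 2 = 0"
  by (metis one_add_one redpoly_1 redpoly_add add_self_bit_poly)

lemma redpoly_dvd: "f dvd p \<Longrightarrow> redpoly f dvd redpoly p"
  by (auto simp: redpoly_mult)

lemma redpoly_surj: "\<exists>P. redpoly P = h"
proof
  show "redpoly (map_poly of_bit h) = h"
    unfolding redpoly_def by (subst map_poly_map_poly) (auto intro!: map_poly_idI)
qed

lemma red2_eq_0_iff_double: "red2 a = 0 \<longleftrightarrow> 2 * a = 0"
  and red2_eq_0_imp_eq_double: "red2 a = 0 \<Longrightarrow> a = 2 * (if a = 2 then 1 else 0)"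
  using Z4_cases[of a] by auto

lemma coeff_double: "coeff (2 * p) n = 2 * coeff p n"
  by (metis coeff_add mult_2)

lemma redpoly_eq_0_iff_double: "redpoly p = 0 \<longleftrightarrow> 2 * p = 0"
  by (simp add: redpoly_def poly_eq_iff coeff_map_poly red2_eq_0_iff_double coeff_double)

lemma redpoly_eq_0_iff_two_dvd: "redpoly p = 0 \<longleftrightarrow> 2 dvd p"
proof
  assume p: "redpoly p = 0"
  have "p = 2 * map_poly (\<lambda>a. if a = 2 then 1 else 0) p"
  proof (rule poly_eqI)
    fix n
    have "red2 (coeff p n) = 0"
      using arg_cong[OF p, of "\<lambda>q. coeff q n"] by (simp add: redpoly_def coeff_map_poly)
    then show "coeff p n = coeff (2 * map_poly (\<lambda>a. if a = 2 then 1 else 0) p) n"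
      by (subst red2_eq_0_imp_eq_double) (simp_all add: coeff_double coeff_map_poly)
  qed
  then show "2 dvd p" by (metis dvd_triv_left)
qed (auto simp: redpoly_mult)

lemma diff_dvd_power_diff: "(a::'a::comm_ring_1) - b dvd a ^ n - b ^ n"
  by (metis power_diff_sumr2 dvd_triv_left)

lemma power_two_power_add:
  assumes "(4::'a::comm_ring_1) = 0" and "k \<ge> 1"
  shows "(x + y :: 'a) ^ 2 ^ k = x ^ 2 ^ k + y ^ 2 ^ k + 2 * (x * y) ^ 2 ^ (k - 1)"
  using assms(2)
proof (induct k rule: dec_induct)
  case base
  then show ?case by (simp add: power2_sum)
next
  case (step k)
  have "(x + y) ^ 2 ^ Suc k = ((x + y) ^ 2 ^ k) ^ 2"
    by (simp add: power_mult[symmetric] mult.commute)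
  also have "\<dots> = (x ^ 2 ^ k) ^ 2 + (y ^ 2 ^ k) ^ 2 + 2 * (x ^ 2 ^ k * y ^ 2 ^ k)
      + 4 * ((x ^ 2 ^ k + y ^ 2 ^ k) * (x * y) ^ 2 ^ (k - 1) + ((x * y) ^ 2 ^ (k - 1)) ^ 2)"
    unfolding step(3) by (simp add: power2_eq_square algebra_simps)
  also have "\<dots> = x ^ 2 ^ Suc k + y ^ 2 ^ Suc k + 2 * (x * y) ^ 2 ^ (Suc k - 1)"
    using assms(1) by (simp add: power_mult[symmetric] mult.commute power_mult_distrib)
  finally show ?case .
qed

lemma dvd_double_iff_redpoly_dvd:
  assumes "redpoly f \<noteq> 0"
  shows "f dvd 2 * U \<longleftrightarrow> redpoly f dvd redpoly U"
proof
  assume "f dvd 2 * U"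
  then obtain G where G: "2 * U = f * G" by auto
  then have "redpoly f * redpoly G = 0"
    by (metis redpoly_mult redpoly_2 mult_zero_left)
  with assms obtain G' where G': "G = 2 * G'"
    using redpoly_eq_0_iff_two_dvd by auto
  have "2 * (U - f * G') = 0" using G G' by (simp add: algebra_simps)
  then have "redpoly (U - f * G') = 0" by (simp only: redpoly_eq_0_iff_double)
  then have "redpoly U = redpoly f * redpoly G'" by (simp add: redpoly_diff redpoly_mult)
  then show "redpoly f dvd redpoly U" by simp
next
  assume "redpoly f dvd redpoly U"
  then obtain h where h: "redpoly U = redpoly f * h" by auto
  obtain H where H: "redpoly H = h" using redpoly_surj by blast
  have "redpoly (U - f * H) = 0" by (simp add: redpoly_diff redpoly_mult h H)
  then have "2 * (U - f * H) = 0" by (simp only: redpoly_eq_0_iff_double)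
  then have "2 * U = f * (2 * H)" by (simp add: algebra_simps)
  then show "f dvd 2 * U" by simp
qed

lemma dvd_square_diff_of_redpoly_dvd:
  assumes "redpoly f dvd redpoly (r - r')"
  shows "f dvd r ^ 2 - r' ^ 2"
proof -
  obtain h where h: "redpoly (r - r') = redpoly f * h" using assms by auto
  obtain H where H: "redpoly H = h" using redpoly_surj by blast
  have "redpoly (r - r' - f * H) = 0"
    by (simp add: redpoly_diff redpoly_mult H h[unfolded redpoly_diff])
  then obtain e where "r - r' - f * H = 2 * e"
    using redpoly_eq_0_iff_two_dvd by auto
  then have r: "r = r' + f * H + 2 * e" by (simp add: algebra_simps)
  have "r ^ 2 - r' ^ 2 = f * (2 * r' * H + f * H ^ 2 + 4 * H * e) + 4 * (r' * e + e ^ 2)"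
    unfolding r by (simp add: power2_eq_square algebra_simps)
  also have "\<dots> = f * (2 * r' * H + f * H ^ 2 + 4 * H * e)"
    by (simp add: numeral_4_poly_eq_0)
  finally show ?thesis by simp
qed

lemma dvd_power_two_power_diff_of_redpoly_dvd:
  assumes "redpoly f dvd redpoly (r - r')" and "k \<ge> 1"
  shows "f dvd r ^ 2 ^ k - r' ^ 2 ^ k"
  using assms(2)
proof (induct k rule: dec_induct)
  case base
  then show ?case using dvd_square_diff_of_redpoly_dvd[OF assms(1)] by simp
next
  case (step k)
  from dvd_square_diff_of_redpoly_dvd[OF redpoly_dvd[OF step(3)]]
  show ?case by (simp add: power_mult[symmetric] mult.commute)
qed

lemma card_degree_less:
  assumes "finite (UNIV :: 'a::zero set)" and "m > 0"
  shows "card {p :: 'a poly. degree p < m} = CARD('a) ^ m"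
proof -
  let ?L = "{xs :: 'a list. set xs \<subseteq> UNIV \<and> length xs = m}"
  have "inj_on Poly ?L"
  proof (rule inj_onI)
    fix xs ys assume xs: "xs \<in> ?L" and ys: "ys \<in> ?L" and "Poly xs = Poly ys"
    then have "nth_default 0 xs i = nth_default 0 ys i" for i by (metis coeff_Poly_eq)
    then show "xs = ys" using xs ys
      by (intro nth_equalityI) (auto simp: nth_default_def split: if_splits, metis)
  qed
  moreover have "Poly ` ?L = {p. degree p < m}"
  proof (intro equalityI subsetI)
    fix p assume "p \<in> Poly ` ?L"
    then obtain xs where xs: "length xs = m" "p = Poly xs" by auto
    have "degree p \<le> m - 1"
      by (rule degree_le) (use xs in \<open>auto simp: nth_default_def\<close>)
    then show "p \<in> {p. degree p < m}" using assms(2) by auto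
  next
    fix p :: "'a poly" assume p: "p \<in> {p. degree p < m}"
    have "p = Poly (map (coeff p) [0..<m])"
      by (rule poly_eqI) (use p in \<open>auto simp: nth_default_def coeff_eq_0\<close>)
    then show "p \<in> Poly ` ?L" by (intro image_eqI[of _ _ "map (coeff p) [0..<m]"]) auto
  qed
  ultimately show ?thesis using card_image card_lists_length_eq[OF assms(1)] by force
qed

lemma UNIV_bit: "(UNIV :: bit set) = {0, 1}"
  by auto

lemma card_Fq_carrier: "m > 0 \<Longrightarrow> card (Fq_carrier m) = 2 ^ m"
  using card_degree_less[where 'a = bit] by (simp add: Fq_carrier_def UNIV_bit numeral_2_eq_2)

lemma finite_Fq_carrier: "finite (Fq_carrier m)"
proof (cases "m = 0")
  case True
  then show ?thesis by (simp add: Fq_carrier_def)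
next
  case False
  then show ?thesis using card_Fq_carrier[of m] by (intro card_ge_0_finite) simp
qed

lemma card_quadruples_bij_betw:
  assumes "bij_betw h A B"
  shows "card {(a, b, c, e). a \<in> A \<and> b \<in> A \<and> c \<in> A \<and> e \<in> A \<and> P (h a) (h b) (h c) (h e)}
    = card {(a, b, c, e). a \<in> B \<and> b \<in> B \<and> c \<in> B \<and> e \<in> B \<and> P a b c e}"
    (is "card ?SA = card ?SB")
proof -
  let ?h4 = "map_prod h (map_prod h (map_prod h h))"
  have "bij_betw ?h4 (A \<times> A \<times> A \<times> A) (B \<times> B \<times> B \<times> B)"
    using assms by (intro bij_betw_map_prod)
  then have "bij_betw ?h4 {t \<in> A \<times> A \<times> A \<times> A. t \<in> ?SA} {t \<in> B \<times> B \<times> B \<times> B. t \<in> ?SB}"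
    by (rule bij_betw_Collect) (use bij_betwE[OF assms] in auto)
  moreover have "{t \<in> A \<times> A \<times> A \<times> A. t \<in> ?SA} = ?SA" and "{t \<in> B \<times> B \<times> B \<times> B. t \<in> ?SB} = ?SB"
    by auto
  ultimately show ?thesis by (simp only: bij_betw_same_card)
qed

section \<open>Teichmueller representatives\<close>

locale teichmueller_system =
  fixes m :: nat and f \<beta> :: "4 poly"
  assumes m_pos: "m > 0"
    and modulus: "GR_modulus m f"
    and beta_order: "GR_unit_of_order f \<beta> (2 ^ m - 1)"
begin

lemma lead_coeff_modulus: "lead_coeff f = 1" and degree_modulus: "degree f = m"
  using modulus unfolding GR_modulus_def by auto

lemma degree_ge_if_modulus_dvd:
  assumes "f dvd p" and "p \<noteq> 0"
  shows "m \<le> degree p"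
proof -
  obtain h where h: "p = f * h" using assms(1) by auto
  with assms(2) have "h \<noteq> 0" by auto
  with h have "coeff p (degree f + degree h) \<noteq> 0"
    by (simp add: coeff_mult_degree_sum lead_coeff_modulus)
  then show ?thesis by (metis le_degree le_add1 degree_modulus le_trans)
qed

lemma GR_carrier_eq_if_dvd_diff:
  assumes "X \<in> GR_carrier m" and "Y \<in> GR_carrier m" and "f dvd X - Y"
  shows "X = Y"
proof (rule ccontr)
  assume "X \<noteq> Y"
  with assms(3) have "m \<le> degree (X - Y)" by (simp add: degree_ge_if_modulus_dvd)
  moreover have "degree (X - Y) < m"
    using assms(1,2) by (auto simp: GR_carrier_def intro: degree_diff_less)
  ultimately show False by simp
qed

definition GR_reduce :: "4 poly \<Rightarrow> 4 poly" where
  "GR_reduce p = snd (pseudo_divmod p f)"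

lemma GR_reduce: "GR_reduce p \<in> GR_carrier m" "f dvd GR_reduce p - p"
proof -
  obtain q r where qr: "pseudo_divmod p f = (q, r)" by fastforce
  have f0: "f \<noteq> 0" using lead_coeff_modulus by auto
  note pd = pseudo_divmod[OF f0 qr]
  have "p = f * q + r" using pd(1) lead_coeff_modulus by simp
  moreover have "GR_reduce p = r" by (simp add: GR_reduce_def qr)
  ultimately have "GR_reduce p - p = f * (- q)" by simp
  then show "f dvd GR_reduce p - p" by (metis dvd_triv_left)
  show "GR_reduce p \<in> GR_carrier m"
    using pd(2) m_pos degree_modulus by (auto simp: GR_reduce_def qr GR_carrier_def)
qed

lemma beta_power_q_minus_1: "f dvd \<beta> ^ (2 ^ m - 1) - 1"
  and beta_power_ne_1: "0 < k \<Longrightarrow> k < 2 ^ m - 1 \<Longrightarrow> \<not> f dvd \<beta> ^ k - 1"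
  using beta_order by (auto simp: GR_unit_of_order_def)

lemma modulus_dvd_beta_power_mult_cancel:
  assumes "f dvd \<beta> ^ i * Y"
  shows "f dvd Y"
proof -
  obtain u where "f dvd \<beta> * u - 1" using beta_order by (auto simp: GR_unit_of_order_def)
  then have "f dvd (\<beta> * u) ^ i - 1 ^ i" using dvd_trans diff_dvd_power_diff by blast
  then have "f dvd ((\<beta> * u) ^ i - 1) * Y" by simp
  moreover have "f dvd \<beta> ^ i * Y * u ^ i" using assms by simp
  moreover have "Y = \<beta> ^ i * Y * u ^ i - ((\<beta> * u) ^ i - 1) * Y"
    by (simp add: algebra_simps power_mult_distrib)
  ultimately show ?thesis by (metis dvd_diff)
qed

lemma Teich_power_q:
  assumes "X \<in> Teich m f \<beta>"
  shows "f dvd X ^ 2 ^ m - X"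
proof -
  consider "X = 0" | i where "f dvd X - \<beta> ^ i"
    using assms by (auto simp: Teich_def)
  then show ?thesis
  proof cases
    case 1
    then show ?thesis using m_pos by (simp add: zero_power)
  next
    case 2
    have "f dvd X ^ 2 ^ m - (\<beta> ^ i) ^ 2 ^ m"
      using 2 dvd_trans diff_dvd_power_diff by blast
    moreover have "f dvd (\<beta> ^ i) ^ 2 ^ m - \<beta> ^ i"
    proof -
      have "f dvd \<beta> ^ i * ((\<beta> ^ (2 ^ m - 1)) ^ i - 1)"
        using beta_power_q_minus_1 dvd_trans diff_dvd_power_diff dvd_mult by (metis power_one)
      moreover have "(2::nat) ^ m = Suc (2 ^ m - 1)" using m_pos by simp
      then have "(\<beta> ^ i) ^ 2 ^ m = \<beta> ^ i * (\<beta> ^ (2 ^ m - 1)) ^ i"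
        by (metis power_Suc power_mult mult.commute)
      ultimately show ?thesis by (simp add: right_diff_distrib)
    qed
    ultimately have "f dvd (X ^ 2 ^ m - (\<beta> ^ i) ^ 2 ^ m) + ((\<beta> ^ i) ^ 2 ^ m - \<beta> ^ i) - (X - \<beta> ^ i)"
      using 2 by (rule dvd_diff[OF dvd_add])
    then show ?thesis by simp
  qed
qed

lemma card_Teich: "card (Teich m f \<beta>) = 2 ^ m"
proof -
  let ?U = "{X \<in> GR_carrier m. \<exists>i < 2 ^ m - 1. f dvd X - \<beta> ^ i}"
  have T: "Teich m f \<beta> = insert 0 ?U"
    using m_pos by (auto simp: Teich_def GR_carrier_def)
  have "0 \<notin> ?U"
  proof
    assume "0 \<in> ?U"
    then obtain i where "f dvd \<beta> ^ i * 1" by (auto simp: dvd_minus_iff)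
    then have "f dvd 1" by (rule modulus_dvd_beta_power_mult_cancel)
    then show False using degree_ge_if_modulus_dvd[of 1] m_pos by simp
  qed
  have U: "?U = (\<lambda>i. GR_reduce (\<beta> ^ i)) ` {..<2 ^ m - 1}"
  proof (intro equalityI subsetI)
    fix X assume "X \<in> ?U"
    then obtain i where i: "i < 2 ^ m - 1" "f dvd X - \<beta> ^ i" "X \<in> GR_carrier m" by auto
    have "f dvd (X - \<beta> ^ i) - (GR_reduce (\<beta> ^ i) - \<beta> ^ i)"
      using i(2) GR_reduce(2)[of "\<beta> ^ i"] by (rule dvd_diff)
    then have "X = GR_reduce (\<beta> ^ i)"
      using GR_carrier_eq_if_dvd_diff[OF i(3) GR_reduce(1)] by simp
    then show "X \<in> (\<lambda>i. GR_reduce (\<beta> ^ i)) ` {..<2 ^ m - 1}" using i by auto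
  qed (use GR_reduce dvd_minus_iff in \<open>fastforce simp: dvd_diff_commute\<close>)
  have "inj_on (\<lambda>i. GR_reduce (\<beta> ^ i)) {..<2 ^ m - 1}"
  proof -
    have ne: False if ij: "i < j" "j < 2 ^ m - 1" "GR_reduce (\<beta> ^ i) = GR_reduce (\<beta> ^ j)" for i j
    proof -
      have "f dvd (GR_reduce (\<beta> ^ i) - \<beta> ^ i) - (GR_reduce (\<beta> ^ j) - \<beta> ^ j)"
        using GR_reduce(2)[of "\<beta> ^ i"] GR_reduce(2)[of "\<beta> ^ j"] by (rule dvd_diff)
      then have "f dvd \<beta> ^ i * (\<beta> ^ (j - i) - 1)"
        using ij by (simp add: algebra_simps flip: power_add)
      then have "f dvd \<beta> ^ (j - i) - 1" by (rule modulus_dvd_beta_power_mult_cancel)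
      then show False using beta_power_ne_1[of "j - i"] ij by auto
    qed
    show ?thesis
    proof (rule inj_onI)
      fix i j assume "i \<in> {..<2 ^ m - 1}" "j \<in> {..<2 ^ m - 1}"
        and "GR_reduce (\<beta> ^ i) = GR_reduce (\<beta> ^ j)"
      then show "i = j" using ne[of i j] ne[of j i] by (cases i j rule: linorder_cases) auto
    qed
  qed
  then have "card ?U = 2 ^ m - 1" and "finite ?U" unfolding U by (simp_all add: card_image)
  then show ?thesis
    using T card_insert_disjoint[OF \<open>finite ?U\<close> \<open>0 \<notin> ?U\<close>] m_pos by simp
qed

lemma Teich_subset_GR_carrier: "Teich m f \<beta> \<subseteq> GR_carrier m"
  by (auto simp: Teich_def)

lemma zero_in_Teich: "0 \<in> Teich m f \<beta>"
  using m_pos by (simp add: Teich_def GR_carrier_def)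

lemma inj_on_redpoly_Teich: "inj_on redpoly (Teich m f \<beta>)"
proof (rule inj_onI)
  fix X Y assume X: "X \<in> Teich m f \<beta>" and Y: "Y \<in> Teich m f \<beta>" and "redpoly X = redpoly Y"
  then have "f dvd X ^ 2 ^ m - Y ^ 2 ^ m"
    using m_pos dvd_power_two_power_diff_of_redpoly_dvd[of f X Y m] by (simp add: redpoly_diff)
  then have "f dvd (X ^ 2 ^ m - Y ^ 2 ^ m) - (X ^ 2 ^ m - X) + (Y ^ 2 ^ m - Y)"
    using Teich_power_q[OF X] Teich_power_q[OF Y] by (metis dvd_add dvd_diff)
  then have "f dvd X - Y" by (simp add: algebra_simps)
  then show "X = Y"
    using GR_carrier_eq_if_dvd_diff X Y Teich_subset_GR_carrier by auto
qed

lemma degree_redpoly_modulus: "degree (redpoly f) = m"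
proof -
  have "coeff (redpoly f) m = 1"
    using lead_coeff_modulus degree_modulus by (simp add: redpoly_def coeff_map_poly)
  then have "m \<le> degree (redpoly f)" by (metis le_degree one_neq_zero)
  moreover have "degree (redpoly f) \<le> m"
    using degree_modulus by (metis redpoly_def map_poly_degree_leq)
  ultimately show ?thesis by simp
qed

lemma bij_betw_redpoly_Teich: "bij_betw redpoly (Teich m f \<beta>) (Fq_carrier m)"
proof -
  have "redpoly ` Teich m f \<beta> \<subseteq> Fq_carrier m"
    using Teich_subset_GR_carrier
    by (auto simp: GR_carrier_def Fq_carrier_def redpoly_def
        intro: le_less_trans[OF map_poly_degree_leq])
  moreover have "card (redpoly ` Teich m f \<beta>) = card (Fq_carrier m)"
    using card_image[OF inj_on_redpoly_Teich] card_Teich card_Fq_carrier[OF m_pos] by simp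
  ultimately show ?thesis
    using inj_on_redpoly_Teich finite_Fq_carrier by (simp add: bij_betw_def card_subset_eq)
qed

text \<open>Fermat's little theorem in \<open>\<bbbF>\<^sub>q\<close>, obtained by reducing the Teichmueller
  representative of \<open>p mod g\<close>.\<close>

lemma redpoly_modulus_dvd_power_q_diff: "redpoly f dvd p ^ 2 ^ m - p"
proof -
  let ?g = "redpoly f"
  have "?g \<noteq> 0" using degree_redpoly_modulus m_pos by auto
  then have "p mod ?g \<in> Fq_carrier m"
    using degree_mod_less'[of ?g p] degree_redpoly_modulus m_pos
    by (cases "p mod ?g = 0") (auto simp: Fq_carrier_def)
  then obtain X where X: "X \<in> Teich m f \<beta>" "redpoly X = p mod ?g"
    using bij_betw_redpoly_Teich by (metis bij_betw_def imageE)
  have "?g dvd (p mod ?g) ^ 2 ^ m - p mod ?g"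
    using redpoly_dvd[OF Teich_power_q[OF X(1)]] X(2) by (simp add: redpoly_diff redpoly_power)
  moreover have "?g dvd p - p mod ?g" by (metis minus_mod_eq_mult_div dvd_triv_left)
  moreover from this have "?g dvd p ^ 2 ^ m - (p mod ?g) ^ 2 ^ m"
    using dvd_trans diff_dvd_power_diff by blast
  ultimately have "?g dvd (p ^ 2 ^ m - (p mod ?g) ^ 2 ^ m) + ((p mod ?g) ^ 2 ^ m - p mod ?g)
      - (p - p mod ?g)"
    by (metis dvd_add dvd_diff)
  then show ?thesis by (simp add: algebra_simps)
qed

lemma prime_redpoly_modulus: "prime_elem (redpoly f)"
  using modulus by (auto simp: GR_modulus_def intro: field_poly_irreducible_imp_prime)

lemma Teich_sum_condition_iff:
  assumes T: "X \<in> Teich m f \<beta>" "Y \<in> Teich m f \<beta>" "Z \<in> Teich m f \<beta>" "W \<in> Teich m f \<beta>"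
  shows "f dvd X + Y - Z - W - 2 * B \<longleftrightarrow>
    redpoly f dvd redpoly X + redpoly Y + redpoly Z + redpoly W \<and>
    redpoly f dvd redpoly X * redpoly Y + redpoly Z * redpoly W + redpoly B ^ 2"
proof -
  let ?g = "redpoly f" and ?q = "(2::nat) ^ m" and ?h = "(2::nat) ^ (m - 1)"
  let ?x = "redpoly X" and ?y = "redpoly Y" and ?z = "redpoly Z" and ?w = "redpoly W"
    and ?b = "redpoly B"
  define E where "E = (X * Y) ^ ?h - (Z * W) ^ ?h + B"
  define T1 where "T1 = (X ^ ?q - X) + (Y ^ ?q - Y) - (Z ^ ?q - Z) - (W ^ ?q - W)"
  have "f dvd T1" unfolding T1_def using Teich_power_q T by (metis dvd_add dvd_diff)
  have "m \<ge> 1" using m_pos by simp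
  have LHS: "X + Y - Z - W - 2 * B = ((X + Y) ^ ?q - (Z + W) ^ ?q) - 2 * E - T1"
    unfolding E_def T1_def power_two_power_add[OF numeral_4_poly_eq_0 \<open>m \<ge> 1\<close>]
    by (simp add: algebra_simps)
  have lift: "f dvd (X + Y) ^ ?q - (Z + W) ^ ?q" if "?g dvd ?x + ?y + ?z + ?w"
    using dvd_power_two_power_diff_of_redpoly_dvd[of f "X + Y" "Z + W" m] that m_pos
    by (simp add: redpoly_diff redpoly_add add.assoc)
  have "?g dvd redpoly E \<longleftrightarrow> ?g dvd ?x * ?y + ?z * ?w + ?b ^ 2"
  proof -
    have "?q = 2 * ?h" using m_pos by (simp add: power_eq_if)
    then have "redpoly E ^ 2 = (?x * ?y + ?z * ?w + ?b ^ 2)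
        + (((?x * ?y) ^ ?q + ?x * ?y) + ((?z * ?w) ^ ?q + ?z * ?w))"
      by (simp add: E_def redpoly_diff redpoly_add redpoly_power redpoly_mult power_mult
          power2_eq_square algebra_simps)
    moreover have "?g dvd ((?x * ?y) ^ ?q + ?x * ?y) + ((?z * ?w) ^ ?q + ?z * ?w)"
      using redpoly_modulus_dvd_power_q_diff by (simp add: dvd_add)
    ultimately have "?g dvd redpoly E ^ 2 \<longleftrightarrow> ?g dvd ?x * ?y + ?z * ?w + ?b ^ 2"
      by (simp only: dvd_add_left_iff)
    then show ?thesis
      using prime_redpoly_modulus prime_elem_dvd_power_iff by (metis zero_less_numeral)
  qed
  moreover have "?g \<noteq> 0" using prime_redpoly_modulus by auto
  moreover have "redpoly (X + Y - Z - W - 2 * B) = ?x + ?y + ?z + ?w"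
    by (simp add: redpoly_diff redpoly_add redpoly_mult)
  ultimately show ?thesis
    using \<open>f dvd T1\<close> lift LHS dvd_double_iff_redpoly_dvd[of f E] redpoly_dvd[of f]
    by (metis dvd_diff dvd_add_right_iff diff_add_cancel)
qed

lemma card_Teich_solutions:
  "card {(X, Y, Z, W). X \<in> Teich m f \<beta> \<and> Y \<in> Teich m f \<beta> \<and> Z \<in> Teich m f \<beta> \<and> W \<in> Teich m f \<beta> \<and>
      f dvd (X + Y - Z - W - 2 * B) \<and>
      redpoly f dvd (redpoly X ^ 3 + redpoly Y ^ 3 + redpoly Z ^ 3 + redpoly W ^ 3 - redpoly B ^ 3 * d)}
   = card {(x, y, z, w). x \<in> Fq_carrier m \<and> y \<in> Fq_carrier m \<and> z \<in> Fq_carrier m \<and>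
      w \<in> Fq_carrier m \<and> redpoly f dvd x + y + z + w \<and>
      redpoly f dvd x * y + z * w + redpoly B ^ 2 \<and>
      redpoly f dvd x ^ 3 + y ^ 3 + z ^ 3 + w ^ 3 + redpoly B ^ 3 * d}"
proof -
  let ?g = "redpoly f" and ?b = "redpoly B"
  let ?system = "\<lambda>x y z w. ?g dvd x + y + z + w \<and> ?g dvd x * y + z * w + ?b ^ 2 \<and>
      ?g dvd x ^ 3 + y ^ 3 + z ^ 3 + w ^ 3 + ?b ^ 3 * d"
  have "(X \<in> Teich m f \<beta> \<and> Y \<in> Teich m f \<beta> \<and> Z \<in> Teich m f \<beta> \<and> W \<in> Teich m f \<beta> \<and>
      f dvd (X + Y - Z - W - 2 * B) \<and>
      ?g dvd (redpoly X ^ 3 + redpoly Y ^ 3 + redpoly Z ^ 3 + redpoly W ^ 3 - ?b ^ 3 * d)) \<longleftrightarrow>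
    (X \<in> Teich m f \<beta> \<and> Y \<in> Teich m f \<beta> \<and> Z \<in> Teich m f \<beta> \<and> W \<in> Teich m f \<beta> \<and>
      ?system (redpoly X) (redpoly Y) (redpoly Z) (redpoly W))" for X Y Z W
    using Teich_sum_condition_iff[of X Y Z W B] by auto
  then show ?thesis
    by (simp only:) (rule card_quadruples_bij_betw[OF bij_betw_redpoly_Teich])
qed

end

section \<open>The field \<open>\<bbbF>\<^sub>q\<close>\<close>

lemma diff_dvd_poly_diff: "(a::'a::comm_ring_1) - b dvd poly p a - poly p b"
proof (induct p)
  case (pCons c p)
  have "poly (pCons c p) a - poly (pCons c p) b = (a - b) * poly p a + b * (poly p a - poly p b)"
    by (simp add: algebra_simps)
  with pCons show ?case by simp
qed simp

text \<open>\<open>\<bbbF>\<^sub>q\<close> is represented by the residues of degree \<open>< m\<close> modulo an irreducible \<open>g\<close> of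
  degree \<open>m\<close>. The identity \<open>p\<^sup>q \<equiv> p\<close> is taken as an assumption: for \<open>g = f mod 2\<close> it was
  derived above from the Teichmueller set.\<close>

locale binary_field =
  fixes g :: "bit poly" and m :: nat
  assumes prime_g: "prime_elem g"
    and degree_g: "degree g = m"
    and fermat: "g dvd p ^ 2 ^ m - p"
begin

abbreviation F :: "bit poly set" where
  "F \<equiv> Fq_carrier m"

lemma m_pos: "m > 0"
  using prime_g degree_g is_unit_iff_degree[of g] prime_elem_not_unit by fastforce

lemma not_dvd_1: "\<not> g dvd 1"
  using prime_g by (rule prime_elem_not_unit)

lemma dvd_mult_iff: "g dvd a * b \<longleftrightarrow> g dvd a \<or> g dvd b"
  using prime_g by (rule prime_elem_dvd_mult_iff)

lemma card_F: "card F = 2 ^ m"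
  using card_Fq_carrier m_pos .

lemma F_eq_if_dvd_add:
  assumes "a \<in> F" and "b \<in> F" and "g dvd a + b"
  shows "a = b"
proof -
  have "degree (a + b) < m" using assms(1,2) by (auto simp: Fq_carrier_def intro: degree_add_less)
  then have "a + b = 0" using dvd_imp_degree_le[OF assms(3)] degree_g by force
  then show ?thesis by simp
qed

lemma add_in_F: "a \<in> F \<Longrightarrow> b \<in> F \<Longrightarrow> a + b \<in> F"
  by (auto simp: Fq_carrier_def intro: degree_add_less)

lemma zero_in_F: "0 \<in> F" and one_in_F: "1 \<in> F"
  using m_pos by (simp_all add: Fq_carrier_def)

lemma mod_in_F: "p mod g \<in> F"
  using degree_mod_less'[of g p] degree_g m_pos prime_g
  by (cases "p mod g = 0") (auto simp: Fq_carrier_def)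

lemma dvd_add_mod: "g dvd p + p mod g"
  by (metis diff_bit_poly minus_mod_eq_mult_div dvd_triv_left)

lemma not_dvd_if_in_F: "a \<in> F \<Longrightarrow> a \<noteq> 0 \<Longrightarrow> \<not> g dvd a"
  using F_eq_if_dvd_add[of a 0] zero_in_F by auto

lemma root_mod_in_F:
  assumes "g dvd poly P x"
  shows "x mod g \<in> F \<and> g dvd poly P (x mod g)"
proof -
  have "g dvd poly P x - poly P (x mod g)"
    by (rule dvd_trans[OF _ diff_dvd_poly_diff]) (simp add: dvd_add_mod)
  with assms show ?thesis using mod_in_F by (simp add: dvd_add_right_iff)
qed

lemma power_q_minus_1:
  assumes "\<not> g dvd a"
  shows "g dvd a ^ (2 ^ m - 1) + 1"
proof -
  have "(2::nat) ^ m = Suc (2 ^ m - 1)" using m_pos by simp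
  then have "a ^ 2 ^ m - a = a * (a ^ (2 ^ m - 1) + 1)"
    by (metis power_Suc diff_bit_poly distrib_left mult_1_right)
  then show ?thesis using fermat[of a] assms by (simp add: dvd_mult_iff)
qed

lemma inverse_in_F:
  assumes "\<not> g dvd a"
  obtains w where "w \<in> F" and "g dvd a * w + 1"
proof
  have "(2::nat) ^ 1 \<le> 2 ^ m" using m_pos by (intro power_increasing) auto
  then have "(2::nat) ^ m - 1 = Suc (2 ^ m - 2)" by simp
  then have "a ^ (2 ^ m - 1) = a * a ^ (2 ^ m - 2)" by simp
  then have "g dvd a * a ^ (2 ^ m - 2) + 1" using power_q_minus_1[OF assms] by simp
  moreover have "g dvd a * (a ^ (2 ^ m - 2) + a ^ (2 ^ m - 2) mod g)"
    using dvd_add_mod by simp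
  ultimately have "g dvd (a * a ^ (2 ^ m - 2) + 1) + a * (a ^ (2 ^ m - 2) + a ^ (2 ^ m - 2) mod g)"
    by (rule dvd_add)
  then show "g dvd a * (a ^ (2 ^ m - 2) mod g) + 1" by (simp add: algebra_simps)
qed (rule mod_in_F)

text \<open>Solvability of \<open>y\<^sup>2 + y = a\<close> in \<open>\<bbbF>\<^sub>q\<close>; by Artin-Schreier it means \<open>Tr(a) = 0\<close>.\<close>

definition AS_solvable :: "bit poly \<Rightarrow> bool" where
  "AS_solvable a \<longleftrightarrow> (\<exists>y. g dvd y ^ 2 + y + a)"

lemma AS_solvable_in_F:
  assumes "AS_solvable a"
  obtains y where "y \<in> F" and "g dvd y ^ 2 + y + a"
proof -
  obtain y where "g dvd poly [:a, 1, 1:] y"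
    using assms by (auto simp: AS_solvable_def algebra_simps power2_eq_square)
  from root_mod_in_F[OF this]
  have "y mod g \<in> F" and "g dvd (y mod g) ^ 2 + y mod g + a"
    by (simp_all add: algebra_simps power2_eq_square)
  then show thesis by (rule that)
qed

lemma AS_solvable_add:
  assumes "AS_solvable a" and "AS_solvable b"
  shows "AS_solvable (a + b)"
proof -
  obtain y z where "g dvd y ^ 2 + y + a" and "g dvd z ^ 2 + z + b"
    using assms by (auto simp: AS_solvable_def)
  moreover have "(y + z) ^ 2 + (y + z) + (a + b) = (y ^ 2 + y + a) + (z ^ 2 + z + b)"
    by (simp add: algebra_simps power2_eq_square)
  ultimately show ?thesis unfolding AS_solvable_def by (metis dvd_add)
qed

lemma AS_solvable_cong:
  assumes "g dvd a + c" and "AS_solvable a"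
  shows "AS_solvable c"
proof -
  obtain y where "g dvd y ^ 2 + y + a" using assms(2) by (auto simp: AS_solvable_def)
  moreover have "y ^ 2 + y + c = (y ^ 2 + y + a) + (a + c)" by (simp add: algebra_simps)
  ultimately show ?thesis unfolding AS_solvable_def using assms(1) by (metis dvd_add)
qed

lemma card_F_coeff_0: "2 * card {y \<in> F. coeff y 0 = 0} = 2 ^ m"
proof -
  let ?A = "{y \<in> F. coeff y 0 = 0}" and ?B = "{y \<in> F. coeff y 0 = 1}"
  have image: "(\<lambda>y. y + 1) ` ?A = ?B"
  proof (intro equalityI subsetI)
    fix x assume "x \<in> (\<lambda>y. y + 1) ` ?A"
    then obtain y where "y \<in> ?A" and "x = y + 1" by blast
    then show "x \<in> ?B" using add_in_F one_in_F by simp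
  next
    fix y assume "y \<in> ?B"
    then have "y + 1 \<in> ?A" and "y = (y + 1) + 1" using add_in_F one_in_F by simp_all
    then show "y \<in> (\<lambda>y. y + 1) ` ?A" by blast
  qed
  have "inj_on (\<lambda>y. y + 1) ?A" by (simp add: inj_on_def)
  from card_image[OF this] have "card ?B = card ?A" by (simp only: image)
  moreover have "F = ?A \<union> ?B" and "?A \<inter> ?B = {}" by auto
  moreover have "finite ?A" and "finite ?B" using finite_Fq_carrier by simp_all
  ultimately show ?thesis using card_F card_Un_disjoint[of ?A ?B] by simp
qed

lemma AS_solvable_image:
  "{a \<in> F. AS_solvable a} = (\<lambda>y. (y ^ 2 + y) mod g) ` {y \<in> F. coeff y 0 = 0}"
proof (intro equalityI subsetI)
  fix a assume "a \<in> {a \<in> F. AS_solvable a}"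
  then have a: "a \<in> F" "AS_solvable a" by auto
  then obtain y where y: "y \<in> F" "g dvd y ^ 2 + y + a" by (blast elim: AS_solvable_in_F)
  have image: "a = (z ^ 2 + z) mod g" if "z \<in> F" "g dvd z ^ 2 + z + a" for z
  proof -
    have "g dvd ((z ^ 2 + z) + (z ^ 2 + z) mod g) + (z ^ 2 + z + a)"
      using that(2) dvd_add_mod by (rule dvd_add[rotated])
    then show ?thesis using F_eq_if_dvd_add[OF a(1) mod_in_F] by (simp add: algebra_simps)
  qed
  show "a \<in> (\<lambda>y. (y ^ 2 + y) mod g) ` {y \<in> F. coeff y 0 = 0}"
  proof (cases "coeff y 0 = 0")
    case True
    then show ?thesis using image[OF y] y(1) by auto
  next
    case False
    have "(y + 1) ^ 2 + (y + 1) + a = y ^ 2 + y + a" by (simp add: algebra_simps power2_eq_square)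
    with y(2) have "g dvd (y + 1) ^ 2 + (y + 1) + a" by (simp only:)
    then have "a = ((y + 1) ^ 2 + (y + 1)) mod g"
      using image[of "y + 1"] y(1) add_in_F one_in_F by blast
    moreover have "coeff (y + 1) 0 = 0" using False by simp
    ultimately show ?thesis using y(1) add_in_F one_in_F by auto
  qed
next
  fix a assume "a \<in> (\<lambda>y. (y ^ 2 + y) mod g) ` {y \<in> F. coeff y 0 = 0}"
  then obtain y where "a = (y ^ 2 + y) mod g" by auto
  moreover have "g dvd y ^ 2 + y + (y ^ 2 + y) mod g" by (rule dvd_add_mod)
  ultimately show "a \<in> {a \<in> F. AS_solvable a}"
    using mod_in_F by (auto simp: AS_solvable_def)
qed

lemma inj_on_AS_map: "inj_on (\<lambda>y. (y ^ 2 + y) mod g) {y \<in> F. coeff y 0 = 0}"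
proof (rule inj_onI)
  fix y z assume y: "y \<in> {y \<in> F. coeff y 0 = 0}" and z: "z \<in> {y \<in> F. coeff y 0 = 0}"
    and "(y ^ 2 + y) mod g = (z ^ 2 + z) mod g"
  then have "g dvd (y ^ 2 + y) - (z ^ 2 + z)" by (simp only: mod_eq_dvd_iff)
  moreover have "(y ^ 2 + y) - (z ^ 2 + z) = (y + z) * (y + (z + 1))"
    by (simp add: algebra_simps power2_eq_square)
  ultimately consider "g dvd y + z" | "g dvd y + (z + 1)" by (auto simp: dvd_mult_iff)
  then show "y = z"
  proof cases
    case 2
    then have "y = z + 1" using F_eq_if_dvd_add y z add_in_F one_in_F by auto
    then show ?thesis using y z by auto
  qed (use F_eq_if_dvd_add y z in auto)
qed

lemma card_AS_solvable: "2 * card {a \<in> F. AS_solvable a} = 2 ^ m"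
  using card_F_coeff_0 AS_solvable_image card_image[OF inj_on_AS_map] by simp

text \<open>The solvable elements form an additive subgroup of index 2.\<close>

lemma AS_solvable_add_of_not_in_F:
  assumes "a \<in> F" "b \<in> F" "\<not> AS_solvable a" "\<not> AS_solvable b"
  shows "AS_solvable (a + b)"
proof -
  let ?H = "{h \<in> F. AS_solvable h}"
  have "(\<lambda>h. a + h) ` ?H \<subseteq> F - ?H"
  proof
    fix x assume "x \<in> (\<lambda>h. a + h) ` ?H"
    then obtain h where h: "h \<in> ?H" "x = a + h" by auto
    have "\<not> AS_solvable x"
    proof
      assume "AS_solvable x"
      with h have "AS_solvable a" using AS_solvable_add[of x h] by simp
      with assms(3) show False by simp
    qed
    then show "x \<in> F - ?H" using h add_in_F assms(1) by auto
  qed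
  moreover have "card ((\<lambda>h. a + h) ` ?H) = card (F - ?H)"
  proof -
    have "card ((\<lambda>h. a + h) ` ?H) = card ?H" by (rule card_image) (simp add: inj_on_def)
    also have "\<dots> = card F - card ?H" using card_AS_solvable card_F by simp
    also have "\<dots> = card (F - ?H)" using finite_Fq_carrier by (simp add: card_Diff_subset)
    finally show ?thesis .
  qed
  ultimately have "(\<lambda>h. a + h) ` ?H = F - ?H"
    using finite_Fq_carrier by (simp add: card_subset_eq)
  moreover have "b \<in> F - ?H" using assms(2,4) by auto
  ultimately have "b \<in> (\<lambda>h. a + h) ` ?H" by simp
  then obtain h where "h \<in> ?H" and "b = a + h" by blast
  then show ?thesis by (simp flip: add.assoc)
qed

lemma AS_solvable_mod_iff: "AS_solvable (a mod g) \<longleftrightarrow> AS_solvable a"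
  using AS_solvable_cong dvd_add_mod by (metis add.commute)

lemma AS_solvable_add_of_not:
  assumes "\<not> AS_solvable a" and "\<not> AS_solvable b"
  shows "AS_solvable (a + b)"
proof -
  have "AS_solvable (a mod g + b mod g)"
    using AS_solvable_add_of_not_in_F mod_in_F assms by (simp add: AS_solvable_mod_iff)
  moreover have "g dvd (a mod g + b mod g) + (a + b)"
    using dvd_add[OF dvd_add_mod[of a] dvd_add_mod[of b]] by (simp add: algebra_simps)
  ultimately show ?thesis by (rule AS_solvable_cong[rotated])
qed

definition quad_roots :: "bit poly \<Rightarrow> bit poly set" where
  "quad_roots d = {v \<in> F. g dvd v ^ 2 + d * v + 1}"

definition cubic_roots :: "bit poly \<Rightarrow> bit poly set" where
  "cubic_roots d = {x \<in> F. g dvd x ^ 3 + x + d}"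

lemma quad_roots_ne_iff: "quad_roots d \<noteq> {} \<longleftrightarrow> (\<exists>v. g dvd v ^ 2 + d * v + 1)"
proof
  assume "\<exists>v. g dvd v ^ 2 + d * v + 1"
  then obtain v where "g dvd poly [:1, d, 1:] v" by (auto simp: algebra_simps power2_eq_square)
  from root_mod_in_F[OF this] show "quad_roots d \<noteq> {}"
    by (auto simp: quad_roots_def algebra_simps power2_eq_square)
qed (auto simp: quad_roots_def)

lemma cubic_roots_ne_iff: "cubic_roots d \<noteq> {} \<longleftrightarrow> (\<exists>x. g dvd x ^ 3 + x + d)"
proof
  assume "\<exists>x. g dvd x ^ 3 + x + d"
  then obtain x where "g dvd poly [:d, 1, 0, 1:] x" by (auto simp: algebra_simps power3_eq_cube)
  from root_mod_in_F[OF this] show "cubic_roots d \<noteq> {}"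
    by (auto simp: cubic_roots_def algebra_simps power3_eq_cube)
qed (auto simp: cubic_roots_def)

lemma quad_roots_0: "quad_roots 0 = {1}"
proof -
  have "v ^ 2 + 0 * v + 1 = (v + 1) * (v + 1)" for v :: "bit poly"
    by (simp add: algebra_simps power2_eq_square)
  then show ?thesis
    using F_eq_if_dvd_add one_in_F by (auto simp: quad_roots_def dvd_mult_iff)
qed

lemma not_dvd_if_quad_root:
  assumes "g dvd v ^ 2 + d * v + 1"
  shows "\<not> g dvd v"
proof
  assume "g dvd v"
  with assms have "g dvd (v ^ 2 + d * v + 1) + (v + d) * v" by (rule dvd_add[OF _ dvd_mult])
  then show False using not_dvd_1 by (simp add: algebra_simps power2_eq_square)
qed

text \<open>The two roots of \<open>v\<^sup>2 + d v + 1\<close> are inverse to each other and sum to \<open>d\<close>.\<close>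

lemma card_quad_roots:
  assumes "d \<in> F" and "d \<noteq> 0" and "quad_roots d \<noteq> {}"
  shows "card (quad_roots d) = 2"
proof -
  obtain v where v: "v \<in> F" and hv: "g dvd v ^ 2 + d * v + 1"
    using assms(3) by (auto simp: quad_roots_def)
  obtain w where w: "w \<in> F" and hw: "g dvd v * w + 1"
    using not_dvd_if_quad_root[OF hv] by (rule inverse_in_F)
  have "g dvd w ^ 2 * (v ^ 2 + d * v + 1) + (v * w + 1 + d * w) * (v * w + 1)"
    using hv hw by (rule dvd_add[OF dvd_mult dvd_mult])
  then have hw2: "g dvd w ^ 2 + d * w + 1" by (simp add: algebra_simps power2_eq_square)
  have "g dvd w * (v ^ 2 + d * v + 1) + (v + d) * (v * w + 1)"
    using hv hw by (rule dvd_add[OF dvd_mult dvd_mult])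
  then have sum: "g dvd d + v + w" by (simp add: algebra_simps power2_eq_square)
  have "v \<noteq> w"
  proof
    assume "v = w"
    then have "g dvd (v + 1) * (v + 1)" using hw by (simp add: algebra_simps)
    then have "v = 1" using F_eq_if_dvd_add v one_in_F by (auto simp: dvd_mult_iff)
    then show False using \<open>v = w\<close> sum not_dvd_if_in_F assms(1,2) by simp
  qed
  have "quad_roots d = {v, w}"
  proof (intro equalityI subsetI)
    fix x assume "x \<in> quad_roots d"
    then have x: "x \<in> F" and hx: "g dvd x ^ 2 + d * x + 1" by (auto simp: quad_roots_def)
    have "g dvd (x ^ 2 + d * x + 1) + x * (d + v + w) + (v * w + 1)"
      using hx sum hw by (rule dvd_add[OF dvd_add[OF _ dvd_mult]])
    then have "g dvd (x + v) * (x + w)" by (simp add: algebra_simps power2_eq_square)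
    then show "x \<in> {v, w}" using F_eq_if_dvd_add x v w by (auto simp: dvd_mult_iff)
  qed (use v w hv hw2 in \<open>auto simp: quad_roots_def\<close>)
  then show ?thesis using \<open>v \<noteq> w\<close> by simp
qed

lemma quad_roots_ne_iff_AS_solvable:
  assumes "g dvd d * i + 1"
  shows "quad_roots d \<noteq> {} \<longleftrightarrow> AS_solvable (i ^ 2)"
proof -
  have "(\<exists>v. g dvd v ^ 2 + d * v + 1) \<longleftrightarrow> AS_solvable (i ^ 2)"
  proof
    assume "\<exists>v. g dvd v ^ 2 + d * v + 1"
    then obtain v where hv: "g dvd v ^ 2 + d * v + 1" ..
    have "g dvd i ^ 2 * (v ^ 2 + d * v + 1) + (i * v) * (d * i + 1)"
      using hv assms by (rule dvd_add[OF dvd_mult dvd_mult])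
    then have "g dvd (i * v) ^ 2 + i * v + i ^ 2" by (simp add: algebra_simps power2_eq_square)
    then show "AS_solvable (i ^ 2)" unfolding AS_solvable_def ..
  next
    assume "AS_solvable (i ^ 2)"
    then obtain y where hy: "g dvd y ^ 2 + y + i ^ 2" by (auto simp: AS_solvable_def)
    have "g dvd d ^ 2 * (y ^ 2 + y + i ^ 2) + (d * i + 1) * (d * i + 1)"
      using hy assms by (rule dvd_add[OF dvd_mult dvd_mult])
    then have "g dvd (d * y) ^ 2 + d * (d * y) + 1" by (simp add: algebra_simps power2_eq_square)
    then show "\<exists>v. g dvd v ^ 2 + d * v + 1" ..
  qed
  then show ?thesis by (simp only: quad_roots_ne_iff)
qed

lemma cubic_roots_eq_insert:
  assumes "r \<in> F" and "g dvd r ^ 3 + r + d"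
  shows "cubic_roots d = insert r {x \<in> F. g dvd x ^ 2 + r * x + r ^ 2 + 1}"
proof -
  have factor: "g dvd x ^ 3 + x + d \<longleftrightarrow> g dvd x + r \<or> g dvd x ^ 2 + r * x + r ^ 2 + 1" for x
  proof -
    have "(x + r) * (x ^ 2 + r * x + r ^ 2 + 1) = (x ^ 3 + x + d) + (r ^ 3 + r + d)"
      by (simp add: algebra_simps power2_eq_square power3_eq_cube)
    then have "g dvd (x + r) * (x ^ 2 + r * x + r ^ 2 + 1) \<longleftrightarrow> g dvd x ^ 3 + x + d"
      using dvd_add_left_iff[OF assms(2)] by (simp only:)
    then show ?thesis by (simp add: dvd_mult_iff)
  qed
  show ?thesis
    using assms F_eq_if_dvd_add[OF _ assms(1)] by (auto simp: cubic_roots_def factor)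
qed

lemma other_cubic_roots_ne_iff:
  assumes "g dvd r * j + 1"
  shows "{x \<in> F. g dvd x ^ 2 + r * x + r ^ 2 + 1} \<noteq> {} \<longleftrightarrow> AS_solvable (1 + j ^ 2)"
proof
  assume "{x \<in> F. g dvd x ^ 2 + r * x + r ^ 2 + 1} \<noteq> {}"
  then obtain x where hx: "g dvd x ^ 2 + r * x + r ^ 2 + 1" by auto
  have "g dvd j ^ 2 * (x ^ 2 + r * x + r ^ 2 + 1) + (j * x + j * r + 1) * (r * j + 1)"
    using hx assms by (rule dvd_add[OF dvd_mult dvd_mult])
  then have "g dvd (j * x) ^ 2 + j * x + (1 + j ^ 2)" by (simp add: algebra_simps power2_eq_square)
  then show "AS_solvable (1 + j ^ 2)" unfolding AS_solvable_def ..
next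
  assume "AS_solvable (1 + j ^ 2)"
  then obtain y where hy: "g dvd y ^ 2 + y + (1 + j ^ 2)" by (auto simp: AS_solvable_def)
  have "g dvd r ^ 2 * (y ^ 2 + y + (1 + j ^ 2)) + (r * j + 1) * (r * j + 1)"
    using hy assms by (rule dvd_add[OF dvd_mult dvd_mult])
  then have "g dvd poly [:r ^ 2 + 1, r, 1:] (r * y)" by (simp add: algebra_simps power2_eq_square)
  from root_mod_in_F[OF this] show "{x \<in> F. g dvd x ^ 2 + r * x + r ^ 2 + 1} \<noteq> {}"
    by (auto simp: algebra_simps power2_eq_square)
qed

text \<open>With \<open>d = r\<^sup>3 + r = r (r + 1)\<^sup>2\<close> one has \<open>1/d = 1/r + k + k\<^sup>2\<close> for \<open>k = 1/(r + 1)\<close>,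
  so \<open>1/d\<^sup>2\<close> and \<open>1/r\<^sup>2\<close> differ by an element of the form \<open>y\<^sup>2 + y\<close>.\<close>

lemma AS_solvable_inverse_squares_add:
  assumes "g dvd r ^ 3 + r + d" and "\<not> g dvd r + 1"
    and "g dvd d * i + 1" and "g dvd r * j + 1"
  shows "AS_solvable (i ^ 2 + j ^ 2)"
proof -
  obtain k where hk: "g dvd (r + 1) * k + 1" using assms(2) by (meson inverse_in_F)
  have "g dvd (j + k + k ^ 2) * (r ^ 3 + r + d) + (r + 1) ^ 2 * (r * j + 1)
      + (r * (r + 1)) * ((r + 1) * k + 1) + (r * ((r + 1) * k + 1)) * ((r + 1) * k + 1)"
    using assms(1,4) hk hk by (rule dvd_add[OF dvd_add[OF dvd_add[OF dvd_mult dvd_mult] dvd_mult] dvd_mult])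
  then have "g dvd d * (j + k + k ^ 2) + 1" by (simp add: algebra_simps power2_eq_square power3_eq_cube)
  then have "g dvd i * (d * (j + k + k ^ 2) + 1) + (j + k + k ^ 2) * (d * i + 1)"
    using assms(3) by (rule dvd_add[OF dvd_mult dvd_mult])
  then have "g dvd i + j + k + k ^ 2" by (simp add: algebra_simps power2_eq_square)
  then have "g dvd (i + j + k + k ^ 2) * (i + j + k + k ^ 2)" by (rule dvd_mult)
  then have "g dvd (k ^ 2) ^ 2 + k ^ 2 + (i ^ 2 + j ^ 2)" by (simp add: algebra_simps power2_eq_square)
  then show ?thesis unfolding AS_solvable_def ..
qed

end

lemma two_power_odd_minus_1:
  assumes "odd m"
  obtains k where "(2::nat) ^ m - 1 = 3 * k + 1"
proof -
  obtain n where n: "m = 2 * n + 1" using assms oddE by blast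
  have "(4::nat) ^ n mod 3 = 1" by (induct n) (simp_all add: mod_mult_right_eq[symmetric])
  moreover have "(2::nat) ^ m = 2 * 4 ^ n" unfolding n by (simp add: power_mult)
  ultimately have "(2::nat) ^ m mod 3 = 2" using mod_mult_right_eq[of "2::nat" "4 ^ n" 3] by simp
  moreover have "x mod 3 = 2 \<Longrightarrow> x - 1 = 3 * ((x - 1) div 3) + 1" for x :: nat by presburger
  ultimately have "(2::nat) ^ m - 1 = 3 * ((2 ^ m - 1) div 3) + 1" by blast
  then show ?thesis by (rule that)
qed

locale odd_binary_field = binary_field +
  assumes odd_m: "odd m"
begin

lemma not_AS_solvable_1: "\<not> AS_solvable 1"
proof
  assume "AS_solvable 1"
  then obtain y where hy: "g dvd y ^ 2 + y + 1" by (auto simp: AS_solvable_def)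
  then have "\<not> g dvd y" using not_dvd_if_quad_root[of y 1] by simp
  obtain k where k: "(2::nat) ^ m - 1 = 3 * k + 1" using odd_m by (rule two_power_odd_minus_1)
  have "g dvd (y + 1) * (y ^ 2 + y + 1)" using hy by (rule dvd_mult)
  then have "g dvd y ^ 3 - 1" by (simp add: algebra_simps power2_eq_square power3_eq_cube)
  then have "g dvd (y ^ 3) ^ k - 1 ^ k" using diff_dvd_power_diff by (rule dvd_trans)
  then have "g dvd (y ^ 3) ^ k + 1" by simp
  moreover have "g dvd y * (y ^ 3) ^ k + 1"
    using power_q_minus_1[OF \<open>\<not> g dvd y\<close>] unfolding k by (simp add: power_add power_mult)
  ultimately have "g dvd (y * (y ^ 3) ^ k + 1) + y * ((y ^ 3) ^ k + 1)"
    by (rule dvd_add[OF _ dvd_mult, rotated])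
  then have "g dvd y + 1" by (simp add: algebra_simps)
  with hy have "g dvd (y ^ 2 + y + 1) + y * (y + 1)" by (rule dvd_add[OF _ dvd_mult])
  then show False using not_dvd_1 by (simp add: algebra_simps power2_eq_square)
qed

text \<open>Since \<open>3\<close> does not divide \<open>q - 1\<close>, cubing is a bijection of \<open>\<bbbF>\<^sub>q\<^sup>*\<close>.\<close>

lemma cube_root_exists:
  assumes "\<not> g dvd v"
  obtains t where "\<not> g dvd t" and "g dvd t ^ 3 + v"
proof -
  let ?F' = "F - {0}" and ?cube = "\<lambda>t. t ^ 3 mod g"
  obtain k where k: "(2::nat) ^ m - 1 = 3 * k + 1" using odd_m by (rule two_power_odd_minus_1)
  have inv: "g dvd t * (t ^ 3) ^ k + 1" if "t \<in> ?F'" for t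
    using power_q_minus_1[of t] not_dvd_if_in_F that unfolding k by (simp add: power_add power_mult)
  have "?cube ` ?F' \<subseteq> ?F'"
  proof
    fix x assume "x \<in> ?cube ` ?F'"
    then obtain t where t: "t \<in> ?F'" "x = t ^ 3 mod g" by auto
    then have "\<not> g dvd t ^ 3"
      using not_dvd_if_in_F prime_elem_dvd_power[OF prime_g] by blast
    then show "x \<in> ?F'" using t mod_in_F by (auto simp: dvd_eq_mod_eq_0)
  qed
  moreover have "inj_on ?cube ?F'"
  proof (rule inj_onI)
    fix t s assume t: "t \<in> ?F'" and s: "s \<in> ?F'" and "?cube t = ?cube s"
    then have "g dvd t ^ 3 - s ^ 3" by (simp only: mod_eq_dvd_iff)
    then have "g dvd (t ^ 3) ^ k - (s ^ 3) ^ k" using diff_dvd_power_diff by (rule dvd_trans)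
    with inv[OF s] inv[OF t] have "g dvd t * (s * (s ^ 3) ^ k + 1) + s * (t * (t ^ 3) ^ k + 1)
        + (t * s) * ((t ^ 3) ^ k - (s ^ 3) ^ k)"
      by (rule dvd_add[OF dvd_add[OF dvd_mult dvd_mult] dvd_mult])
    then have "g dvd t + s" by (simp add: algebra_simps)
    then show "t = s" using F_eq_if_dvd_add t s by auto
  qed
  ultimately have "?cube ` ?F' = ?F'" using finite_Fq_carrier by (simp add: endo_inj_surj)
  moreover have "v mod g \<in> ?F'" using mod_in_F assms by (auto simp: dvd_eq_mod_eq_0)
  ultimately have "v mod g \<in> ?cube ` ?F'" by simp
  then obtain t where "v mod g = t ^ 3 mod g" and t: "t \<in> ?F'" by (rule imageE)
  then have "g dvd v - t ^ 3" by (simp only: mod_eq_dvd_iff)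
  then have "g dvd t ^ 3 + v" by (simp add: add.commute)
  moreover have "\<not> g dvd t" using t not_dvd_if_in_F by simp
  ultimately show thesis by (rule that[rotated])
qed

lemma cubic_roots_ne_if_quad_roots_ne:
  assumes "quad_roots d \<noteq> {}"
  shows "cubic_roots d \<noteq> {}"
proof -
  obtain v where hv: "g dvd v ^ 2 + d * v + 1" using assms by (auto simp: quad_roots_def)
  obtain t where "\<not> g dvd t" and ht: "g dvd t ^ 3 + v"
    using not_dvd_if_quad_root[OF hv] by (rule cube_root_exists)
  obtain u where hu: "g dvd t * u + 1" using \<open>\<not> g dvd t\<close> by (meson inverse_in_F)
  have "g dvd u ^ 3 * (t ^ 3 + v) + ((t * u) ^ 2 + t * u + 1) * (t * u + 1)"
    using ht hu by (rule dvd_add[OF dvd_mult dvd_mult])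
  then have "g dvd v * u ^ 3 + 1" by (simp add: algebra_simps power2_eq_square power3_eq_cube)
  with hv have "g dvd u ^ 3 * (v ^ 2 + d * v + 1) + (v + d) * (v * u ^ 3 + 1)"
    by (rule dvd_add[OF dvd_mult dvd_mult])
  then have "g dvd d + v + u ^ 3" by (simp add: algebra_simps power2_eq_square power3_eq_cube)
  with ht have "g dvd (t ^ 3 + v) + (d + v + u ^ 3) + (t + u) * (t * u + 1)"
    using hu by (rule dvd_add[OF dvd_add dvd_mult])
  then have "g dvd (t + u) ^ 3 + (t + u) + d"
    by (simp add: algebra_simps power2_eq_square power3_eq_cube)
  then show ?thesis using cubic_roots_ne_iff by blast
qed

lemma card_cubic_roots_eq_1_iff:
  assumes "d \<in> F" and "d \<noteq> 0" and "cubic_roots d \<noteq> {}"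
  shows "card (cubic_roots d) = 1 \<longleftrightarrow> quad_roots d \<noteq> {}"
proof -
  obtain r where r: "r \<in> F" and hr: "g dvd r ^ 3 + r + d"
    using assms(3) by (auto simp: cubic_roots_def)
  let ?K = "{x \<in> F. g dvd x ^ 2 + r * x + r ^ 2 + 1}"
  have "\<not> g dvd d" using not_dvd_if_in_F assms(1,2) .
  have "\<not> g dvd r + 1"
  proof
    assume "g dvd r + 1"
    then have "r = 1" using F_eq_if_dvd_add r one_in_F by blast
    then show False using hr \<open>\<not> g dvd d\<close> by simp
  qed
  have "\<not> g dvd r"
  proof
    assume "g dvd r"
    with hr have "g dvd (r ^ 3 + r + d) + (r ^ 2 + 1) * r" by (rule dvd_add[OF _ dvd_mult])
    then show False using \<open>\<not> g dvd d\<close> by (simp add: algebra_simps power2_eq_square power3_eq_cube)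
  qed
  have "r \<notin> ?K"
  proof
    assume "r \<in> ?K"
    moreover have "r ^ 2 + r * r + r ^ 2 + 1 = (r + 1) * (r + 1)"
      by (simp add: algebra_simps power2_eq_square)
    ultimately show False using \<open>\<not> g dvd r + 1\<close> by (simp add: dvd_mult_iff)
  qed
  then have "card (cubic_roots d) = 1 \<longleftrightarrow> ?K = {}"
    using cubic_roots_eq_insert[OF r hr] finite_Fq_carrier by simp
  obtain i where hi: "g dvd d * i + 1" using \<open>\<not> g dvd d\<close> by (meson inverse_in_F)
  obtain j where hj: "g dvd r * j + 1" using \<open>\<not> g dvd r\<close> by (meson inverse_in_F)
  have "AS_solvable (i ^ 2 + j ^ 2)"
    using AS_solvable_inverse_squares_add hr \<open>\<not> g dvd r + 1\<close> hi hj by blast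
  then have "AS_solvable (i ^ 2) \<longleftrightarrow> AS_solvable (j ^ 2)"
    using AS_solvable_add[of "i ^ 2" "i ^ 2 + j ^ 2"] AS_solvable_add[of "j ^ 2" "i ^ 2 + j ^ 2"]
    by (auto simp: add.left_commute)
  moreover have "AS_solvable (j ^ 2) \<longleftrightarrow> \<not> AS_solvable (1 + j ^ 2)"
    using AS_solvable_add[of "j ^ 2" "1 + j ^ 2"] AS_solvable_add_of_not[of 1 "j ^ 2"]
      not_AS_solvable_1
    by (auto simp: add.left_commute)
  ultimately show ?thesis
    using \<open>card (cubic_roots d) = 1 \<longleftrightarrow> ?K = {}\<close> other_cubic_roots_ne_iff[OF hj]
      quad_roots_ne_iff_AS_solvable[OF hi]
    by blast
qed

end

section \<open>Counting solutions\<close>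

context binary_field
begin

lemma inj_on_mult_mod:
  assumes "\<not> g dvd b"
  shows "inj_on (\<lambda>v. (b * v) mod g) F"
proof (rule inj_onI)
  fix v v' assume "v \<in> F" "v' \<in> F" and "(b * v) mod g = (b * v') mod g"
  then have "g dvd b * v - b * v'" by (simp only: mod_eq_dvd_iff)
  then have "g dvd b * (v + v')" by (simp add: algebra_simps)
  then show "v = v'" using assms \<open>v \<in> F\<close> \<open>v' \<in> F\<close> F_eq_if_dvd_add by (simp add: dvd_mult_iff)
qed

lemma card_scaled_quad_roots:
  assumes "b \<in> F" and "b \<noteq> 0" and "g dvd e + b * d"
  shows "card {u \<in> F. g dvd u ^ 2 + e * u + b ^ 2} = card (quad_roots d)"
proof -
  let ?V = "{u \<in> F. g dvd u ^ 2 + e * u + b ^ 2}"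
  have "\<not> g dvd b" using not_dvd_if_in_F assms(1,2) .
  then obtain i where hi: "g dvd b * i + 1" by (meson inverse_in_F)
  have "\<not> g dvd i"
  proof
    assume "g dvd i"
    with hi have "g dvd (b * i + 1) + b * i" by (rule dvd_add[OF _ dvd_mult])
    then show False using not_dvd_1 by simp
  qed
  have "(\<lambda>v. (b * v) mod g) ` quad_roots d \<subseteq> ?V"
  proof
    fix u assume "u \<in> (\<lambda>v. (b * v) mod g) ` quad_roots d"
    then obtain v where hv: "g dvd v ^ 2 + d * v + 1" and u: "u = (b * v) mod g"
      by (auto simp: quad_roots_def)
    have "g dvd b ^ 2 * (v ^ 2 + d * v + 1) + (b * v) * (e + b * d)"
      using hv assms(3) by (rule dvd_add[OF dvd_mult dvd_mult])
    then have "g dvd poly [:b ^ 2, e, 1:] (b * v)" by (simp add: algebra_simps power2_eq_square)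
    from root_mod_in_F[OF this] show "u \<in> ?V" by (simp add: u algebra_simps power2_eq_square)
  qed
  moreover have "(\<lambda>u. (i * u) mod g) ` ?V \<subseteq> quad_roots d"
  proof
    fix v assume "v \<in> (\<lambda>u. (i * u) mod g) ` ?V"
    then obtain u where hu: "g dvd u ^ 2 + e * u + b ^ 2" and v: "v = (i * u) mod g" by auto
    have "g dvd i ^ 2 * (u ^ 2 + e * u + b ^ 2) + (d * i * u + b * i + 1) * (b * i + 1)
        + (i ^ 2 * u) * (e + b * d)"
      using hu hi assms(3) by (rule dvd_add[OF dvd_add[OF dvd_mult dvd_mult] dvd_mult])
    then have "g dvd poly [:1, d, 1:] (i * u)" by (simp add: algebra_simps power2_eq_square)
    from root_mod_in_F[OF this] show "v \<in> quad_roots d"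
      by (simp add: v quad_roots_def algebra_simps power2_eq_square)
  qed
  ultimately show ?thesis
    using inj_on_mult_mod[OF \<open>\<not> g dvd b\<close>] inj_on_mult_mod[OF \<open>\<not> g dvd i\<close>] finite_Fq_carrier
    by (intro le_antisym card_inj_on_le) (auto simp: quad_roots_def intro: inj_on_subset)
qed

lemma quadruple_system_eq_image:
  assumes "\<not> g dvd b" and "e \<in> F" and he: "g dvd b * d + e"
  shows "{(x, y, z, w). x \<in> F \<and> y \<in> F \<and> z \<in> F \<and> w \<in> F \<and> g dvd x + y + z + w \<and>
      g dvd x * y + z * w + b ^ 2 \<and> g dvd x ^ 3 + y ^ 3 + z ^ 3 + w ^ 3 + b ^ 3 * d}
    = (\<lambda>(x, z). (x, x + e, z, z + e)) ` {(x, z). x \<in> F \<and> z \<in> F \<and> g dvd x * (x + e) + z * (z + e) + b ^ 2}"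
    (is "?S = _ ` ?U")
proof -
  \<comment> \<open>modulo the two quadratic conditions, the cubic one reads \<open>b\<^sup>2 (x + y + b d) = 0\<close>\<close>
  have cubic: "x ^ 3 + y ^ 3 + z ^ 3 + w ^ 3 + b ^ 3 * d = b ^ 2 * (x + y + b * d)
      + (x + y) * (x * y + z * w + b ^ 2)
      + ((x + y) ^ 2 + (x + y) * (z + w) + (z + w) ^ 2 + z * w) * (x + y + z + w)" for x y z w
    by (simp add: algebra_simps power2_eq_square power3_eq_cube)
  show ?thesis
  proof (intro equalityI subsetI)
    fix t assume "t \<in> ?S"
    then obtain x y z w where t: "t = (x, y, z, w)" and F4: "x \<in> F" "y \<in> F" "z \<in> F" "w \<in> F"
      and h1: "g dvd x + y + z + w" and h2: "g dvd x * y + z * w + b ^ 2"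
      and h3: "g dvd x ^ 3 + y ^ 3 + z ^ 3 + w ^ 3 + b ^ 3 * d" by auto
    have "g dvd (x ^ 3 + y ^ 3 + z ^ 3 + w ^ 3 + b ^ 3 * d) + (x + y) * (x * y + z * w + b ^ 2)
        + ((x + y) ^ 2 + (x + y) * (z + w) + (z + w) ^ 2 + z * w) * (x + y + z + w)"
      using h3 h2 h1 by (rule dvd_add[OF dvd_add[OF _ dvd_mult] dvd_mult])
    then have "g dvd b ^ 2 * (x + y + b * d)" by (simp only: cubic) simp
    then have hs: "g dvd x + y + b * d"
      using \<open>\<not> g dvd b\<close> by (simp add: dvd_mult_iff power2_eq_square)
    have "g dvd (x + y + b * d) + (b * d + e)" using hs he by (rule dvd_add)
    then have y: "y = x + e" using F_eq_if_dvd_add F4 add_in_F \<open>e \<in> F\<close> by (simp add: ac_simps)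
    have "g dvd (x + y + z + w) + (x + y + b * d) + (b * d + e)" using h1 hs he by (rule dvd_add[OF dvd_add])
    then have w: "w = z + e" using F_eq_if_dvd_add F4 add_in_F \<open>e \<in> F\<close> by (simp add: ac_simps)
    have "(x, z) \<in> ?U" using F4(1,3) h2 unfolding y w by (simp add: algebra_simps)
    then show "t \<in> (\<lambda>(x, z). (x, x + e, z, z + e)) ` ?U" unfolding t y w by (rule rev_image_eqI) simp
  next
    fix t assume "t \<in> (\<lambda>(x, z). (x, x + e, z, z + e)) ` ?U"
    then obtain x z where t: "t = (x, x + e, z, z + e)" and F2: "x \<in> F" "z \<in> F"
      and h2: "g dvd x * (x + e) + z * (z + e) + b ^ 2" by auto
    have "g dvd b ^ 2 * (b * d + e) + e * (x * (x + e) + z * (z + e) + b ^ 2)"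
      using he h2 by (rule dvd_add[OF dvd_mult dvd_mult])
    then have "g dvd x ^ 3 + (x + e) ^ 3 + z ^ 3 + (z + e) ^ 3 + b ^ 3 * d"
      by (simp add: algebra_simps power2_eq_square power3_eq_cube)
    then show "t \<in> ?S" using F2 h2 add_in_F \<open>e \<in> F\<close> unfolding t by (simp add: ac_simps)
  qed
qed

lemma card_quadruple_system:
  assumes "b \<in> F" and "b \<noteq> 0" and "d \<in> F"
  shows "card {(x, y, z, w). x \<in> F \<and> y \<in> F \<and> z \<in> F \<and> w \<in> F \<and> g dvd x + y + z + w \<and>
      g dvd x * y + z * w + b ^ 2 \<and> g dvd x ^ 3 + y ^ 3 + z ^ 3 + w ^ 3 + b ^ 3 * d}
    = 2 ^ m * card (quad_roots d)"
proof -
  define e where "e = (b * d) mod g"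
  have "e \<in> F" unfolding e_def by (rule mod_in_F)
  have he: "g dvd b * d + e" unfolding e_def by (rule dvd_add_mod)
  have "\<not> g dvd b" using not_dvd_if_in_F assms(1,2) .
  let ?U = "{(x, z). x \<in> F \<and> z \<in> F \<and> g dvd x * (x + e) + z * (z + e) + b ^ 2}"
  let ?V = "{u \<in> F. g dvd u ^ 2 + e * u + b ^ 2}"
  have U: "?U = (\<lambda>(x, u). (x, x + u)) ` (F \<times> ?V)"
  proof (intro equalityI subsetI)
    fix t assume "t \<in> ?U"
    then obtain x z where t: "t = (x, z)" and F2: "x \<in> F" "z \<in> F"
      and h: "g dvd x * (x + e) + z * (z + e) + b ^ 2" by auto
    have "x + z \<in> ?V" using F2 h add_in_F by (simp add: algebra_simps power2_eq_square)
    moreover have "z = x + (x + z)" by simp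
    ultimately show "t \<in> (\<lambda>(x, u). (x, x + u)) ` (F \<times> ?V)" using F2 unfolding t by force
  next
    fix t assume "t \<in> (\<lambda>(x, u). (x, x + u)) ` (F \<times> ?V)"
    then obtain x u where t: "t = (x, x + u)" and F2: "x \<in> F" "u \<in> F"
      and h: "g dvd u ^ 2 + e * u + b ^ 2" by auto
    show "t \<in> ?U" using F2 h add_in_F unfolding t by (simp add: algebra_simps power2_eq_square)
  qed
  have "card {(x, y, z, w). x \<in> F \<and> y \<in> F \<and> z \<in> F \<and> w \<in> F \<and> g dvd x + y + z + w \<and>
      g dvd x * y + z * w + b ^ 2 \<and> g dvd x ^ 3 + y ^ 3 + z ^ 3 + w ^ 3 + b ^ 3 * d}
    = card ?U"
    unfolding quadruple_system_eq_image[OF \<open>\<not> g dvd b\<close> \<open>e \<in> F\<close> he]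
    by (rule card_image) (rule inj_onI, auto)
  also have "\<dots> = card (F \<times> ?V)" unfolding U by (rule card_image) (rule inj_onI, auto)
  also have "\<dots> = 2 ^ m * card (quad_roots d)"
    using card_F card_scaled_quad_roots[OF assms(1,2)] he by (simp add: card_cartesian_product add.commute)
  finally show ?thesis .
qed

end

context odd_binary_field
begin

lemma card_quad_roots_if_unique_cubic_root:
  assumes "d \<in> F" and "d \<noteq> 0" and "card (cubic_roots d) = 1"
  shows "card (quad_roots d) = 2"
  using assms card_cubic_roots_eq_1_iff card_quad_roots by fastforce

lemma quad_roots_empty_if_not_unique_cubic_root:
  assumes "d \<in> F" and "d \<noteq> 0" and "card (cubic_roots d) = 0 \<or> card (cubic_roots d) = 3"
  shows "quad_roots d = {}"
proof (cases "cubic_roots d = {}")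
  case True
  then show ?thesis using cubic_roots_ne_if_quad_roots_ne by blast
next
  case False
  then show ?thesis using card_cubic_roots_eq_1_iff[OF assms(1,2) False] assms(3) by auto
qed

end

theorem corollaryB9:
  fixes m :: nat and f \<beta> B :: "4 poly" and d :: "bit poly"
  assumes "odd m"
    and "GR_modulus m f"
    and "GR_unit_of_order f \<beta> (2 ^ m - 1)"
    and "B \<in> Teich m f \<beta>" and "B \<noteq> 0"
    and "d \<in> Fq_carrier m"
  defines "N \<equiv> card {(X, Y, Z, W). X \<in> Teich m f \<beta> \<and> Y \<in> Teich m f \<beta> \<and>
                 Z \<in> Teich m f \<beta> \<and> W \<in> Teich m f \<beta> \<and>
                 f dvd (X + Y - Z - W - 2 * B) \<and>
                 redpoly f dvd (redpoly X ^ 3 + redpoly Y ^ 3 + redpoly Z ^ 3 + redpoly W ^ 3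
                                - redpoly B ^ 3 * d)}"
  shows "(d = 0 \<longrightarrow> N = 2 ^ m) \<and>
         (d \<in> Mset m f 1 \<longrightarrow> N = 2 ^ (m + 1)) \<and>
         (d \<in> Mset m f 0 \<union> Mset m f 3 \<longrightarrow> N = 0)"
proof -
  interpret teichmueller_system m f \<beta>
    using assms(1-3) by unfold_locales (simp_all add: odd_pos)
  interpret odd_binary_field "redpoly f" m
    using prime_redpoly_modulus degree_redpoly_modulus redpoly_modulus_dvd_power_q_diff assms(1)
    by unfold_locales
  have "redpoly B \<in> F" using bij_betw_apply[OF bij_betw_redpoly_Teich assms(4)] .
  moreover have "redpoly B \<noteq> 0"
    using inj_onD[OF inj_on_redpoly_Teich _ assms(4) zero_in_Teich] assms(5) by auto
  ultimately have N: "N = 2 ^ m * card (quad_roots d)"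
    unfolding N_def card_Teich_solutions using card_quadruple_system assms(6) by simp
  have M: "d \<in> Mset m f i \<longleftrightarrow> d \<noteq> 0 \<and> card (cubic_roots d) = i" for i
    using assms(6) by (auto simp: Mset_def cubic_roots_def)
  show ?thesis
  proof (intro conjI impI)
    assume "d = 0"
    then show "N = 2 ^ m" using N quad_roots_0 by simp
  next
    assume "d \<in> Mset m f 1"
    then show "N = 2 ^ (m + 1)"
      using N M card_quad_roots_if_unique_cubic_root[OF assms(6)] by simp
  next
    assume "d \<in> Mset m f 0 \<union> Mset m f 3"
    then show "N = 0" using N M quad_roots_empty_if_not_unique_cubic_root[OF assms(6)] by auto
  qed
qed

end
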